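(* For every $\varepsilon\in(0,R)$, the approximate solution $u_\varepsilon$ satisfies $$u^*\ge u_\varepsilon\ge u^*-v\qquad\text{in }\Omega_\varepsilon\times(0,\infty).$$
   Context: Standing setting: $n\ge2$, $0<R<\sqrt{\tfrac38(3n-5)(2n-3)^3}$; $B_\rho=\{x\in\mathbb R^n:|x|<\rho\}$; radial functions written in $r=|x|$, subscript $r$ = radial derivative. $\alpha:=\sqrt[3]{9n-15}$, $u^*(r):=-\alpha r^{1/3}$, $\nu:=\tfrac16\sqrt{36n^2-96n+61}$, $J_\nu$ the Bessel function of the first kind of order $\nu$, $x_0,x_1$ the first positive roots of $J_\nu$, $J_\nu'$. $u_0$ satisfies: (C1) $u_0\in C^2(\overline{B_R}\setminus\{0\})$; (C2) radially symmetric; (C3) $u^*\ge u_0$; (C4) $\limsup_{r\searrow0}|r^{\frac32-n-\nu}(u^*(r)-u_0(r))|<\infty$; (C5) $u_0(R)=u^*(R)$; (C6) there is $C>0$ with $0\ge u_{0r}(r)\ge -Cr^{-2/3}$ on $(0,R)$. Fix $\lambda>0$ with $\lambda R<x_1$ and $C>0$ such that $v(r,t):=Ce^{-\lambda^2t}r^{n-\frac32}J_\nu(\lambda r)$ satisfies $u_0\ge u^*-v(\cdot,0)$ in $B_R$. For $\varepsilon\in(0,R)$ let $\Omega_\varepsilon:=B_R\setminus\overline{B_\varepsilon}$ and let $u_{0\varepsilon}\in C^2(\overline{\Omega_\varepsilon})$ be radially symmetric with: $u_{0\varepsilon}(\varepsilon)=u^*(\varepsilon)-v(\varepsilon,0)$;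 $u_{0r}\le u_{0\varepsilon r}\le0$; $u^*\ge u_{0\varepsilon}\ge u^*-v(\cdot,0)$; and $u_{0\varepsilon}=u_0$ on $\{r\in(\varepsilon,R]:u_0(r)<u^*(\varepsilon)-v(\varepsilon,0)-\varepsilon\}$. Let $c_v:=-e^{\lambda^2t}v(\varepsilon,t)$ (independent of $t$) and choose $c^*_\varepsilon>1$ with $c^*_\varepsilon>\sup_{[\varepsilon,R]}|u^*_r|$, $c^*_\varepsilon>\sup_{[\varepsilon,R]}|(u^*-v(\cdot,0))_r|$, $c^*_\varepsilon>\sup_{[\varepsilon,R]}|u_{0\varepsilon r}|$, and $c_v+\frac{n-1}{\varepsilon}c^*_\varepsilon+u^*(\varepsilon)(c^*_\varepsilon)^3\le0$. Let $f_\varepsilon\in C_c^\infty(\mathbb R)$ with $f_\varepsilon(s)=s^3$ for $|s|\le c^*_\varepsilon$ and $f_\varepsilon\le0$ on $(-\infty,0)$. The approximate solution $u_\varepsilon$ is the unique radially symmetric solution, with $u_\varepsilon\in C^{\beta,\beta/2}(\overline{\Omega_\varepsilon}\times[0,\infty))\cap C^{2+\beta,1+\beta/2}(\Omega_\varepsilon\times(0,\infty))$ for some $\beta\in(0,1)$ and $\nabla u_\varepsilon\in L^\infty_{loc}(\overline{\Omega_\varepsilon}\times[0,\infty))$, of $u_{\varepsilon t}=\Delta u_\varepsilon+u_\varepsilon f_\varepsilon(u_{\varepsilon r})$ in $\Omega_\varepsilon\times(0,\infty)$, $u_\varepsilon(\varepsilon,t)=u^*(\varepsilon)-v(\varepsilon,t)$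 and $u_\varepsilon(R,t)=u^*(R)$ for $t>0$, $u_\varepsilon(\cdot,0)=u_{0\varepsilon}$ in $\overline{\Omega_\varepsilon}$. *)

theory Defs
  imports "HOL-Analysis.Analysis"
begin

text \<open>Bessel function of the first kind of (real) order nu, via its power series
  (used for nonnegative arguments).\<close>
definition besselJ :: "real \<Rightarrow> real \<Rightarrow> real" where
  "besselJ \<nu> x = (\<Sum>m. (-1) ^ m / (fact m * Gamma (real m + \<nu> + 1))
                        * (x / 2) ^ (2 * m) * (x / 2) powr \<nu>)"

definition besselJ_deriv_first_root :: "real \<Rightarrow> real" where
  "besselJ_deriv_first_root \<nu> = Inf {x. 0 < x \<and> deriv (besselJ \<nu>) x = 0}"

definition alpha_const :: "nat \<Rightarrow> real" where
  "alpha_const n = root 3 (9 * real n - 15)"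

definition ustar :: "nat \<Rightarrow> real \<Rightarrow> real" where
  "ustar n r = - alpha_const n * r powr (1/3)"

definition nu_const :: "nat \<Rightarrow> real" where
  "nu_const n = sqrt (36 * (real n)^2 - 96 * real n + 61) / 6"

definition vfun :: "nat \<Rightarrow> real \<Rightarrow> real \<Rightarrow> real \<Rightarrow> real \<Rightarrow> real" where
  "vfun n C lam r t = C * exp (- (lam ^ 2) * t) * r powr (real n - 3/2) * besselJ (nu_const n) (lam * r)"

definition smooth_compact_support :: "(real \<Rightarrow> real) \<Rightarrow> bool" where
  "smooth_compact_support f \<longleftrightarrow>
     (\<exists>fs :: nat \<Rightarrow> real \<Rightarrow> real. fs 0 = f \<and>
        (\<forall>k x. (fs k has_real_derivative fs (Suc k) x) (at x)))
     \<and> compact (closure {s. f s \<noteq> 0})"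

end

theory Submission
  imports Defs
begin

text \<open>
  Both bounds come from a comparison principle for the radial equation
  \<open>u_t = u_rr + (n - 1)/r u_r + u f(u_r)\<close> on \<open>[\<epsilon>, R] \<times> [0, \<infinity>)\<close>: at a positive interior
  maximum of the difference of a subsolution and a supersolution their gradients agree,
  and \<open>f(u_r) < 0\<close> there makes the difference strictly decrease in time, which the
  parabolic maximum principle forbids.

  For the upper bound the supersolution is the singular stationary solution
  \<open>u* = - \<alpha> r^(1/3)\<close>, whose gradient stays in the range where \<open>f\<close> is the cube.
  For the lower bound the subsolution is \<open>u* - v\<close>. The order \<open>\<nu>\<close> and the exponent
  \<open>n - 3/2\<close> make the profile \<open>r^(n-3/2) J_\<nu>(\<lambda>r)\<close> of \<open>v\<close> solve the linearisation at
  \<open>u*\<close> of the stationary equation, and the remaining nonlinear terms have a sign by the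
  convexity inequality \<open>(A + W)(B + W')^3 \<ge> A B^3 + 3 A B^2 W' + B^3 W\<close> with \<open>A = - u*\<close>,
  \<open>B = - u*_r\<close>. This needs \<open>v \<ge> 0\<close> and \<open>v_r \<ge> 0\<close>, which hold because \<open>\<lambda>R\<close> lies
  below the first positive zero of \<open>J_\<nu>'\<close>.
\<close>

section \<open>The Bessel function \<open>J_\<nu>\<close>\<close>

definition besselJ_coeff :: "real \<Rightarrow> nat \<Rightarrow> real" where
  "besselJ_coeff \<nu> m = (-1) ^ m / (fact m * Gamma (real m + \<nu> + 1))"

text \<open>\<open>J_\<nu>(x) = (x/2)^\<nu> P_\<nu>(x\<^sup>2/4)\<close> for an entire power series \<open>P_\<nu>\<close>;
  \<open>besselJ_series \<nu> k\<close> is its \<open>k\<close>-th derivative.\<close>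

definition besselJ_series :: "real \<Rightarrow> nat \<Rightarrow> real \<Rightarrow> real" where
  "besselJ_series \<nu> k y = (\<Sum>m. (diffs ^^ k) (besselJ_coeff \<nu>) m * y ^ m)"

lemma besselJ_coeff_Suc:
  assumes "\<nu> > 0"
  shows "besselJ_coeff \<nu> (Suc m) * ((real m + 1) * (real m + \<nu> + 1)) = - besselJ_coeff \<nu> m"
proof -
  have "real m + \<nu> + 1 \<notin> \<int>\<^sub>\<le>\<^sub>0"
    using assms by (auto elim!: nonpos_Ints_cases)
  then have "Gamma (real (Suc m) + \<nu> + 1) = (real m + \<nu> + 1) * Gamma (real m + \<nu> + 1)"
    using Gamma_plus1[of "real m + \<nu> + 1"] by (simp add: add_ac)
  moreover have "Gamma (real m + \<nu> + 1) > 0"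
    using assms by (intro Gamma_real_pos) auto
  moreover have "real m + \<nu> + 1 > 0"
    using assms by simp
  ultimately show ?thesis
    by (simp add: besselJ_coeff_def divide_simps del: of_nat_Suc)
qed

lemma summable_besselJ_coeff:
  assumes "\<nu> > 0"
  shows "summable (\<lambda>m. besselJ_coeff \<nu> m * y ^ m)"
proof (rule summable_ratio_test[where c = "1/2" and N = "nat \<lceil>2 * \<bar>y\<bar>\<rceil>"])
  fix m assume "m \<ge> nat \<lceil>2 * \<bar>y\<bar>\<rceil>"
  define D where "D = (real m + 1) * (real m + \<nu> + 1)"
  have "2 * \<bar>y\<bar> \<le> real m + 1"
    using \<open>m \<ge> nat \<lceil>2 * \<bar>y\<bar>\<rceil>\<close> by linarith
  also have "\<dots> \<le> D"
    using assms by (simp add: D_def algebra_simps)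
  finally have D: "2 * \<bar>y\<bar> \<le> D" "D > 0"
    using assms by (auto simp: D_def add_pos_pos)
  have "besselJ_coeff \<nu> (Suc m) = - besselJ_coeff \<nu> m / D"
    using besselJ_coeff_Suc[OF assms, of m] D(2) unfolding D_def[symmetric]
    by (simp add: field_simps)
  then have "norm (besselJ_coeff \<nu> (Suc m) * y ^ Suc m) = norm (besselJ_coeff \<nu> m * y ^ m) * (\<bar>y\<bar> / D)"
    using D(2) by (simp add: abs_mult power_abs)
  also have "\<dots> \<le> norm (besselJ_coeff \<nu> m * y ^ m) * (1/2)"
    using D by (intro mult_left_mono) (auto simp: divide_simps)
  finally show "norm (besselJ_coeff \<nu> (Suc m) * y ^ Suc m) \<le> 1/2 * norm (besselJ_coeff \<nu> m * y ^ m)"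
    by simp
qed simp

lemma summable_besselJ_series:
  assumes "\<nu> > 0"
  shows "summable (\<lambda>m. (diffs ^^ k) (besselJ_coeff \<nu>) m * y ^ m)"
proof (induction k arbitrary: y)
  case 0
  show ?case using summable_besselJ_coeff[OF assms] by simp
next
  case (Suc k)
  show ?case using termdiff_converges_all[OF Suc.IH] by simp
qed

lemma besselJ_series_has_real_derivative [derivative_intros]:
  assumes "\<nu> > 0" and "(g has_real_derivative g') (at x within S)"
  shows "((\<lambda>x. besselJ_series \<nu> k (g x)) has_real_derivative besselJ_series \<nu> (Suc k) (g x) * g') (at x within S)"
proof -
  have "(besselJ_series \<nu> k has_real_derivative besselJ_series \<nu> (Suc k) y) (at y)" for y
    unfolding besselJ_series_def
    using termdiffs_strong_converges_everywhere[OF summable_besselJ_series[OF assms(1)]] by simp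
  then show ?thesis
    using DERIV_chain2 assms(2) by blast
qed

lemma continuous_on_besselJ_series [continuous_intros]:
  assumes "\<nu> > 0" "continuous_on S g"
  shows "continuous_on S (\<lambda>x. besselJ_series \<nu> k (g x))"
proof -
  have "continuous_on UNIV (besselJ_series \<nu> k)"
    using besselJ_series_has_real_derivative[OF assms(1) DERIV_ident]
    by (intro DERIV_continuous_on) (auto intro: has_field_derivative_at_within)
  then show ?thesis
    using continuous_on_compose2[OF _ assms(2)] by blast
qed

lemma besselJ_series_ode:
  assumes "\<nu> > 0"
  shows "y * besselJ_series \<nu> 2 y + (\<nu> + 1) * besselJ_series \<nu> 1 y + besselJ_series \<nu> 0 y = 0"
proof -
  define c where "c = besselJ_coeff \<nu>"
  define g where "g k = real k * (real k + 1) * c (Suc k) * y ^ k" for k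
  have sums: "(\<lambda>m. (diffs ^^ k) c m * y ^ m) sums besselJ_series \<nu> k y" for k
    unfolding besselJ_series_def c_def by (intro summable_sums summable_besselJ_series assms)
  have "(\<lambda>m. g (Suc m)) = (\<lambda>m. y * ((diffs ^^ 2) c m * y ^ m))"
    by (auto simp: g_def diffs_def numeral_2_eq_2 algebra_simps)
  then have "(\<lambda>m. g (Suc m)) sums (y * besselJ_series \<nu> 2 y)"
    using sums_mult[OF sums[of 2], of y] by simp
  moreover have "g 0 = 0"
    by (simp add: g_def)
  ultimately have "g sums (y * besselJ_series \<nu> 2 y)"
    by (simp add: sums_Suc_iff)
  moreover have "(\<lambda>m. (\<nu> + 1) * ((diffs ^^ 1) c m * y ^ m)) sums ((\<nu> + 1) * besselJ_series \<nu> 1 y)"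
    by (intro sums_mult sums)
  ultimately have "(\<lambda>m. g m + (\<nu> + 1) * ((diffs ^^ 1) c m * y ^ m) + (diffs ^^ 0) c m * y ^ m) sums
      (y * besselJ_series \<nu> 2 y + (\<nu> + 1) * besselJ_series \<nu> 1 y + besselJ_series \<nu> 0 y)"
    by (intro sums_add sums)
  moreover have "g m + (\<nu> + 1) * ((diffs ^^ 1) c m * y ^ m) + (diffs ^^ 0) c m * y ^ m
      = y ^ m * (c (Suc m) * ((real m + 1) * (real m + \<nu> + 1)) + c m)" for m
    by (simp add: g_def diffs_def algebra_simps)
  ultimately show ?thesis
    using besselJ_coeff_Suc[OF assms] sums_unique2[OF _ sums_zero] by (simp add: c_def)
qed

lemma besselJ_eq_series:
  assumes "\<nu> > 0"
  shows "besselJ \<nu> x = (x / 2) powr \<nu> * besselJ_series \<nu> 0 (x\<^sup>2 / 4)"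
proof -
  have "(-1) ^ m / (fact m * Gamma (real m + \<nu> + 1)) * (x / 2) ^ (2 * m) * (x / 2) powr \<nu>
      = (x / 2) powr \<nu> * (besselJ_coeff \<nu> m * (x\<^sup>2 / 4) ^ m)" for m
  proof -
    have "(x / 2) ^ (2 * m) = (x\<^sup>2 / 4) ^ m"
      by (simp add: power_mult power_divide)
    then show ?thesis
      by (simp add: besselJ_coeff_def ac_simps)
  qed
  then have "besselJ \<nu> x = (\<Sum>m. (x / 2) powr \<nu> * (besselJ_coeff \<nu> m * (x\<^sup>2 / 4) ^ m))"
    by (simp only: besselJ_def)
  also have "\<dots> = (x / 2) powr \<nu> * besselJ_series \<nu> 0 (x\<^sup>2 / 4)"
    using suminf_mult[OF summable_besselJ_coeff[OF assms]] by (simp add: besselJ_series_def)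
  finally show ?thesis .
qed

lemma has_real_derivative_besselJ:
  assumes "\<nu> > 0" "x > 0"
  shows "(besselJ \<nu> has_real_derivative
      (x / 2) powr \<nu> / x * (\<nu> * besselJ_series \<nu> 0 (x\<^sup>2 / 4) + x\<^sup>2 / 2 * besselJ_series \<nu> 1 (x\<^sup>2 / 4))) (at x)"
proof -
  have "besselJ \<nu> = (\<lambda>x. (x / 2) powr \<nu> * besselJ_series \<nu> 0 (x\<^sup>2 / 4))"
    using besselJ_eq_series[OF assms(1)] by blast
  then show ?thesis
    using assms
    by (auto intro!: derivative_eq_intros simp: powr_diff field_simps power2_eq_square)
qed

lemma deriv_besselJ:
  assumes "\<nu> > 0" "x > 0"
  shows "deriv (besselJ \<nu>) x =
      (x / 2) powr \<nu> / x * (\<nu> * besselJ_series \<nu> 0 (x\<^sup>2 / 4) + x\<^sup>2 / 2 * besselJ_series \<nu> 1 (x\<^sup>2 / 4))"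
  using DERIV_imp_deriv[OF has_real_derivative_besselJ[OF assms]] .

lemma has_real_derivative_deriv_besselJ:
  assumes "\<nu> > 0" "x > 0"
  shows "(deriv (besselJ \<nu>) has_real_derivative (x / 2) powr \<nu> * (\<nu> * (\<nu> - 1) / x\<^sup>2 * besselJ_series \<nu> 0 (x\<^sup>2 / 4)
      + (\<nu> + 1/2) * besselJ_series \<nu> 1 (x\<^sup>2 / 4) + x\<^sup>2 / 4 * besselJ_series \<nu> 2 (x\<^sup>2 / 4))) (at x)"
proof (rule has_field_derivative_transform_within_open[where S = "{0<..}"])
  show "((\<lambda>x. (x / 2) powr \<nu> / x * (\<nu> * besselJ_series \<nu> 0 (x\<^sup>2 / 4) + x\<^sup>2 / 2 * besselJ_series \<nu> 1 (x\<^sup>2 / 4)))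
      has_real_derivative (x / 2) powr \<nu> * (\<nu> * (\<nu> - 1) / x\<^sup>2 * besselJ_series \<nu> 0 (x\<^sup>2 / 4)
      + (\<nu> + 1/2) * besselJ_series \<nu> 1 (x\<^sup>2 / 4) + x\<^sup>2 / 4 * besselJ_series \<nu> 2 (x\<^sup>2 / 4))) (at x)"
    using assms
    by (auto intro!: derivative_eq_intros simp: powr_diff field_simps power2_eq_square numeral_2_eq_2)
qed (use assms deriv_besselJ[OF assms(1)] in auto)

lemma besselJ_ode:
  assumes "\<nu> > 0" "x > 0"
  shows "x\<^sup>2 * deriv (deriv (besselJ \<nu>)) x + x * deriv (besselJ \<nu>) x + (x\<^sup>2 - \<nu>\<^sup>2) * besselJ \<nu> x = 0"
proof -
  define y where "y = x\<^sup>2 / 4"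
  have "x\<^sup>2 * deriv (deriv (besselJ \<nu>)) x + x * deriv (besselJ \<nu>) x + (x\<^sup>2 - \<nu>\<^sup>2) * besselJ \<nu> x
      = 4 * y * (x / 2) powr \<nu> *
        (y * besselJ_series \<nu> 2 y + (\<nu> + 1) * besselJ_series \<nu> 1 y + besselJ_series \<nu> 0 y)"
    using assms
    by (simp add: DERIV_imp_deriv[OF has_real_derivative_deriv_besselJ[OF assms]] deriv_besselJ besselJ_eq_series
        y_def[symmetric] field_simps power2_eq_square) (simp add: y_def power2_eq_square algebra_simps)
  then show ?thesis
    using besselJ_series_ode[OF assms(1)] by simp
qed

lemma deriv_besselJ_pos:
  assumes "\<nu> > 0" "0 < x" "x < besselJ_deriv_first_root \<nu>"
  shows "deriv (besselJ \<nu>) x > 0"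
proof -
  \<comment> \<open>\<open>J_\<nu>'(\<xi>) = (\<xi>/2)^\<nu> / \<xi> * h \<xi>\<close>, and \<open>h\<close> is positive at \<open>0\<close> and has no zero before the root\<close>
  define h where "h \<xi> = \<nu> * besselJ_series \<nu> 0 (\<xi>\<^sup>2 / 4) + \<xi>\<^sup>2 / 2 * besselJ_series \<nu> 1 (\<xi>\<^sup>2 / 4)" for \<xi>
  have no_root: "h \<xi> \<noteq> 0" if "0 < \<xi>" "\<xi> \<le> x" for \<xi>
  proof
    assume "h \<xi> = 0"
    then have "\<xi> \<in> {x. 0 < x \<and> deriv (besselJ \<nu>) x = 0}"
      using that deriv_besselJ[OF assms(1), of \<xi>] by (simp add: h_def)
    then have "besselJ_deriv_first_root \<nu> \<le> \<xi>"
      unfolding besselJ_deriv_first_root_def by (rule cInf_lower) (auto intro: bdd_belowI[of _ 0])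
    with that assms(3) show False
      by simp
  qed
  have "h 0 = \<nu> / Gamma (\<nu> + 1)"
    by (simp add: h_def besselJ_series_def) (simp add: besselJ_coeff_def)
  then have "h 0 > 0"
    using assms(1) by (simp add: Gamma_real_pos)
  have "h x > 0"
  proof (rule ccontr)
    assume "\<not> h x > 0"
    moreover have "continuous_on {0..x} h"
      unfolding h_def using assms(1) by (intro continuous_intros) auto
    ultimately have "\<exists>\<xi>\<ge>0. \<xi> \<le> x \<and> h \<xi> = 0"
      using \<open>h 0 > 0\<close> assms(2) by (intro IVT2') auto
    then show False
      using no_root \<open>h 0 > 0\<close> by (metis less_eq_real_def less_irrefl)
  qed
  then show ?thesis
    using assms by (simp add: deriv_besselJ h_def)
qed

lemma besselJ_pos:
  assumes "\<nu> > 0" "0 < x" "x < besselJ_deriv_first_root \<nu>"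
  shows "besselJ \<nu> x > 0"
proof -
  have J: "besselJ \<nu> = (\<lambda>x. (x / 2) powr \<nu> * besselJ_series \<nu> 0 (x\<^sup>2 / 4))"
    using besselJ_eq_series[OF assms(1)] by (rule ext)
  have "continuous_on {0..x} (besselJ \<nu>)"
    unfolding J using assms(1) by (intro continuous_intros continuous_on_powr') auto
  moreover have "\<exists>D. (besselJ \<nu> has_real_derivative D) (at y) \<and> D > 0" if "0 < y" "y < x" for y
    using that assms has_real_derivative_besselJ[OF assms(1), of y] deriv_besselJ_pos[OF assms(1), of y]
    by (auto simp: deriv_besselJ[OF assms(1)])
  ultimately have "besselJ \<nu> 0 < besselJ \<nu> x"
    using DERIV_pos_imp_increasing_open[OF assms(2)] by blast
  then show ?thesis
    by (simp add: J)
qed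

section \<open>The comparison function \<open>v\<close>\<close>

lemma has_real_derivative_besselJ_comp [derivative_intros]:
  assumes "\<nu> > 0" "g x > 0" "(g has_real_derivative g') (at x within S)"
  shows "((\<lambda>x. besselJ \<nu> (g x)) has_real_derivative deriv (besselJ \<nu>) (g x) * g') (at x within S)"
  using DERIV_chain2[OF has_real_derivative_besselJ[OF assms(1,2)] assms(3)]
  by (simp add: deriv_besselJ[OF assms(1,2)])

lemma has_real_derivative_deriv_besselJ_comp [derivative_intros]:
  assumes "\<nu> > 0" "g x > 0" "(g has_real_derivative g') (at x within S)"
  shows "((\<lambda>x. deriv (besselJ \<nu>) (g x)) has_real_derivative deriv (deriv (besselJ \<nu>)) (g x) * g') (at x within S)"
  using DERIV_chain2[OF has_real_derivative_deriv_besselJ[OF assms(1,2)] assms(3)]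
  by (simp add: DERIV_imp_deriv[OF has_real_derivative_deriv_besselJ[OF assms(1,2)]])

lemma bessel_profile_ode:
  fixes C lam p \<nu> :: real
  assumes "\<nu> > 0" "lam > 0"
  obtains Vr Vrr where
    "\<And>r. r > 0 \<Longrightarrow> ((\<lambda>r. C * r powr p * besselJ \<nu> (lam * r)) has_real_derivative Vr r) (at r)"
    "\<And>r. r > 0 \<Longrightarrow> (Vr has_real_derivative Vrr r) (at r)"
    "\<And>r. r > 0 \<Longrightarrow> Vrr r + (1 - 2 * p) / r * Vr r + (p\<^sup>2 - \<nu>\<^sup>2) / r\<^sup>2 * (C * r powr p * besselJ \<nu> (lam * r))
      + lam\<^sup>2 * (C * r powr p * besselJ \<nu> (lam * r)) = 0"
    "\<And>r. r > 0 \<Longrightarrow> Vr r = C * r powr (p - 1) * (p * besselJ \<nu> (lam * r) + lam * r * deriv (besselJ \<nu>) (lam * r))"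
proof
  define V where "V r = C * r powr p * besselJ \<nu> (lam * r)" for r
  define Jr where "Jr = deriv (besselJ \<nu>)"
  define Jrr where "Jrr = deriv Jr"
  define Vr where "Vr r = C * r powr p * (p / r * besselJ \<nu> (lam * r) + lam * Jr (lam * r))" for r
  define Vrr where "Vrr r = C * r powr p * (p * (p - 1) / r\<^sup>2 * besselJ \<nu> (lam * r)
    + 2 * p * lam / r * Jr (lam * r) + lam\<^sup>2 * Jrr (lam * r))" for r
  fix r :: real assume "r > 0"
  then have "lam * r > 0"
    using assms(2) by simp
  show "((\<lambda>r. C * r powr p * besselJ \<nu> (lam * r)) has_real_derivative Vr r) (at r)"
    unfolding Vr_def Jr_def using assms \<open>r > 0\<close>
    by (auto intro!: derivative_eq_intros simp: powr_diff field_simps)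
  show "(Vr has_real_derivative Vrr r) (at r)"
    unfolding Vr_def Vrr_def Jrr_def Jr_def using assms \<open>r > 0\<close>
    by (auto intro!: derivative_eq_intros simp: powr_diff field_simps power2_eq_square)
  show "Vr r = C * r powr (p - 1) * (p * besselJ \<nu> (lam * r) + lam * r * deriv (besselJ \<nu>) (lam * r))"
    using \<open>r > 0\<close> by (simp add: Vr_def Jr_def powr_diff field_simps)
  have "Vrr r + (1 - 2 * p) / r * Vr r + (p\<^sup>2 - \<nu>\<^sup>2) / r\<^sup>2 * V r + lam\<^sup>2 * V r
      = C * r powr p / r\<^sup>2 * ((lam * r)\<^sup>2 * Jrr (lam * r) + (lam * r) * Jr (lam * r)
          + ((lam * r)\<^sup>2 - \<nu>\<^sup>2) * besselJ \<nu> (lam * r))"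
    using \<open>r > 0\<close> by (simp add: V_def Vr_def Vrr_def field_simps power2_eq_square)
  also have "\<dots> = 0"
    using besselJ_ode[OF assms(1) \<open>lam * r > 0\<close>] by (simp add: Jr_def Jrr_def)
  finally show "Vrr r + (1 - 2 * p) / r * Vr r + (p\<^sup>2 - \<nu>\<^sup>2) / r\<^sup>2 * (C * r powr p * besselJ \<nu> (lam * r))
      + lam\<^sup>2 * (C * r powr p * besselJ \<nu> (lam * r)) = 0"
    by (simp add: V_def)
qed

lemma nu_const_pos:
  assumes "n \<ge> 2"
  shows "nu_const n > 0"
proof -
  have "36 * (real n)\<^sup>2 - 96 * real n + 61 = 36 * (real n - 2)\<^sup>2 + 48 * (real n - 2) + 13"
    by (simp add: power2_eq_square algebra_simps)
  also have "\<dots> > 0"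
    using assms by (intro add_nonneg_pos add_nonneg_nonneg) auto
  finally show ?thesis
    by (simp add: nu_const_def)
qed

lemma nu_const_sq:
  assumes "n \<ge> 2"
  shows "(real n - 3/2)\<^sup>2 - (nu_const n)\<^sup>2 = - (3 * real n - 5) / 9"
proof -
  have "36 * (real n)\<^sup>2 - 96 * real n + 61 \<ge> 0"
    using nu_const_pos[OF assms] by (simp add: nu_const_def)
  then show ?thesis
    by (simp add: nu_const_def power_divide power2_eq_square field_simps)
qed

text \<open>With \<open>p = n - 3/2\<close> and \<open>\<nu> = nu_const n\<close> the profile equation of \<open>bessel_profile_ode\<close>
  is the linearisation of the stationary equation at \<open>u*\<close> (cf. \<open>ustar_linearization\<close>).\<close>

lemma vfun_initial_profile:
  assumes "n \<ge> 2" "lam > 0"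
  obtains Vr Vrr where
    "\<And>r. r > 0 \<Longrightarrow> ((\<lambda>r. vfun n C lam r 0) has_real_derivative Vr r) (at r)"
    "\<And>r. r > 0 \<Longrightarrow> (Vr has_real_derivative Vrr r) (at r)"
    "\<And>r. r > 0 \<Longrightarrow> Vrr r + (4 - 2 * real n) / r * Vr r - (3 * real n - 5) / (9 * r\<^sup>2) * vfun n C lam r 0
        + lam\<^sup>2 * vfun n C lam r 0 = 0"
    "\<And>r. 0 < r \<Longrightarrow> lam * r < besselJ_deriv_first_root (nu_const n) \<Longrightarrow> C \<ge> 0 \<Longrightarrow>
        0 \<le> vfun n C lam r 0 \<and> 0 \<le> Vr r"
proof -
  define \<nu> where "\<nu> = nu_const n"
  have "\<nu> > 0"
    using nu_const_pos[OF assms(1)] by (simp add: \<nu>_def)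
  have v0: "vfun n C lam r 0 = C * r powr (real n - 3/2) * besselJ \<nu> (lam * r)" for r
    by (simp add: vfun_def \<nu>_def)
  obtain Vr Vrr where
    Vr: "\<And>r. r > 0 \<Longrightarrow> ((\<lambda>r. C * r powr (real n - 3/2) * besselJ \<nu> (lam * r)) has_real_derivative Vr r) (at r)"
    and Vrr: "\<And>r. r > 0 \<Longrightarrow> (Vr has_real_derivative Vrr r) (at r)"
    and ode: "\<And>r. r > 0 \<Longrightarrow> Vrr r + (1 - 2 * (real n - 3/2)) / r * Vr r
        + ((real n - 3/2)\<^sup>2 - \<nu>\<^sup>2) / r\<^sup>2 * (C * r powr (real n - 3/2) * besselJ \<nu> (lam * r))
        + lam\<^sup>2 * (C * r powr (real n - 3/2) * besselJ \<nu> (lam * r)) = 0"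
    and Vr_eq: "\<And>r. r > 0 \<Longrightarrow> Vr r = C * r powr (real n - 3/2 - 1)
        * ((real n - 3/2) * besselJ \<nu> (lam * r) + lam * r * deriv (besselJ \<nu>) (lam * r))"
    using bessel_profile_ode[OF \<open>\<nu> > 0\<close> assms(2), where C = C and p = "real n - 3/2"] by blast
  show ?thesis
  proof (rule that[of Vr Vrr])
    fix r :: real assume "r > 0"
    show "((\<lambda>r. vfun n C lam r 0) has_real_derivative Vr r) (at r)"
      unfolding v0 using Vr[OF \<open>r > 0\<close>] .
    show "(Vr has_real_derivative Vrr r) (at r)"
      using Vrr[OF \<open>r > 0\<close>] .
    show "Vrr r + (4 - 2 * real n) / r * Vr r - (3 * real n - 5) / (9 * r\<^sup>2) * vfun n C lam r 0
        + lam\<^sup>2 * vfun n C lam r 0 = 0"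
      using ode[OF \<open>r > 0\<close>] \<open>r > 0\<close> unfolding v0 \<nu>_def nu_const_sq[OF assms(1)]
      by (simp add: field_simps)
    assume "lam * r < besselJ_deriv_first_root (nu_const n)" "C \<ge> 0"
    then have "besselJ \<nu> (lam * r) > 0" "deriv (besselJ \<nu>) (lam * r) > 0"
      using besselJ_pos deriv_besselJ_pos \<open>\<nu> > 0\<close> \<open>r > 0\<close> assms(2) by (simp_all add: \<nu>_def)
    then show "0 \<le> vfun n C lam r 0 \<and> 0 \<le> Vr r"
      using \<open>C \<ge> 0\<close> \<open>r > 0\<close> assms
      by (auto simp: v0 Vr_eq[OF \<open>r > 0\<close>] intro!: mult_nonneg_nonneg add_nonneg_nonneg)
  qed
qed

section \<open>The singular stationary solution \<open>u*\<close>\<close>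

definition ustar_r :: "nat \<Rightarrow> real \<Rightarrow> real" where
  "ustar_r n r = - alpha_const n / 3 * r powr (-2/3)"

definition ustar_rr :: "nat \<Rightarrow> real \<Rightarrow> real" where
  "ustar_rr n r = 2 * alpha_const n / 9 * r powr (-5/3)"

lemma alpha_const_cube: "alpha_const n ^ 3 = 9 * real n - 15"
  by (simp add: alpha_const_def odd_real_root_pow)

lemma alpha_const_pos: "n \<ge> 2 \<Longrightarrow> alpha_const n > 0"
  by (simp add: alpha_const_def)

lemma ustar_has_real_derivative: "r > 0 \<Longrightarrow> (ustar n has_real_derivative ustar_r n r) (at r)"
  unfolding ustar_def[abs_def] ustar_r_def
  by (auto intro!: derivative_eq_intros)

lemma ustar_r_has_real_derivative: "r > 0 \<Longrightarrow> (ustar_r n has_real_derivative ustar_rr n r) (at r)"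
  unfolding ustar_r_def[abs_def] ustar_rr_def
  by (auto intro!: derivative_eq_intros)

lemma ustar_r_neg: "n \<ge> 2 \<Longrightarrow> r > 0 \<Longrightarrow> ustar_r n r < 0"
  by (simp add: ustar_r_def alpha_const_pos)

lemma ustar_at_cube:
  assumes "q > 0"
  shows "ustar n (q ^ 3) = - alpha_const n * q"
    and "ustar_r n (q ^ 3) = - alpha_const n / (3 * q\<^sup>2)"
    and "ustar_rr n (q ^ 3) = 2 * alpha_const n / (9 * q ^ 5)"
proof -
  have "(q ^ 3) powr a = q powr (3 * a)" for a
  proof -
    have "(q ^ 3) powr a = (q powr 3) powr a"
      using assms by (subst powr_numeral) auto
    then show ?thesis
      by (simp add: powr_powr)
  qed
  then show "ustar n (q ^ 3) = - alpha_const n * q"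
      "ustar_r n (q ^ 3) = - alpha_const n / (3 * q\<^sup>2)"
      "ustar_rr n (q ^ 3) = 2 * alpha_const n / (9 * q ^ 5)"
    using assms by (simp_all add: ustar_def ustar_r_def ustar_rr_def powr_minus_divide powr_realpow)
qed

lemma pos_cube_rootE:
  fixes r :: real
  assumes "r > 0"
  obtains q where "q > 0" "r = q ^ 3"
  using assms by (intro that[of "r powr (1/3)"]) (simp_all add: powr_power)

lemma ustar_stationary:
  assumes "r > 0"
  shows "ustar_rr n r + (real n - 1) / r * ustar_r n r + ustar n r * (ustar_r n r) ^ 3 = 0"
proof -
  obtain q where "q > 0" "r = q ^ 3"
    using pos_cube_rootE[OF assms] .
  then have "ustar_rr n r + (real n - 1) / r * ustar_r n r + ustar n r * (ustar_r n r) ^ 3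
      = alpha_const n / (27 * q ^ 5) * (alpha_const n ^ 3 + 15 - 9 * real n)"
    unfolding \<open>r = q ^ 3\<close> ustar_at_cube[OF \<open>q > 0\<close>]
    by (simp add: field_simps eval_nat_numeral)
  then show ?thesis
    by (simp add: alpha_const_cube)
qed

text \<open>The coefficients of the linearisation of \<open>u (u_r)^3\<close> at \<open>u*\<close>.\<close>

lemma ustar_linearization:
  assumes "r > 0"
  shows "3 * (- ustar n r) * (- ustar_r n r)\<^sup>2 = (3 * real n - 5) / r"
    and "(- ustar_r n r) ^ 3 = (3 * real n - 5) / (9 * r\<^sup>2)"
proof -
  obtain q where "q > 0" "r = q ^ 3"
    using pos_cube_rootE[OF assms] .
  then show "3 * (- ustar n r) * (- ustar_r n r)\<^sup>2 = (3 * real n - 5) / r"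
      "(- ustar_r n r) ^ 3 = (3 * real n - 5) / (9 * r\<^sup>2)"
    unfolding \<open>r = q ^ 3\<close> ustar_at_cube[OF \<open>q > 0\<close>] using alpha_const_cube[of n]
    by (simp_all add: field_simps power2_eq_square power3_eq_cube)
qed

lemma cubic_convexity:
  fixes A B W Wr :: real
  assumes "0 \<le> A" "0 \<le> B" "0 \<le> W" "0 \<le> Wr"
  shows "A * B ^ 3 + 3 * A * B\<^sup>2 * Wr + B ^ 3 * W \<le> (A + W) * (B + Wr) ^ 3"
proof -
  have "(A + W) * (B + Wr) ^ 3 - (A * B ^ 3 + 3 * A * B\<^sup>2 * Wr + B ^ 3 * W)
      = A * (3 * B * Wr\<^sup>2 + Wr ^ 3) + W * ((B + Wr) ^ 3 - B ^ 3)"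
    by (simp add: algebra_simps power2_eq_square power3_eq_cube)
  moreover have "B ^ 3 \<le> (B + Wr) ^ 3"
    using assms by (intro power_mono) auto
  then have "0 \<le> A * (3 * B * Wr\<^sup>2 + Wr ^ 3) + W * ((B + Wr) ^ 3 - B ^ 3)"
    using assms by (intro add_nonneg_nonneg mult_nonneg_nonneg) auto
  ultimately show ?thesis
    by linarith
qed

lemma ustar_minus_profile_subsolution:
  assumes "n \<ge> 2" "r > 0" "0 \<le> W" "0 \<le> Wr"
    and ode: "Wrr + (4 - 2 * real n) / r * Wr - (3 * real n - 5) / (9 * r\<^sup>2) * W + lam\<^sup>2 * W = 0"
  shows "lam\<^sup>2 * W \<le> (ustar_rr n r - Wrr) + (real n - 1) / r * (ustar_r n r - Wr)
      + (ustar n r - W) * (ustar_r n r - Wr) ^ 3"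
proof -
  define A where "A = - ustar n r"
  define B where "B = - ustar_r n r"
  have "A \<ge> 0" "B \<ge> 0"
    using alpha_const_pos[OF assms(1)] ustar_r_neg[OF assms(1,2)] assms(2)
    by (simp_all add: A_def B_def ustar_def)
  have stat: "ustar_rr n r = (real n - 1) / r * B - A * B ^ 3"
    using ustar_stationary[OF assms(2), of n] by (simp add: A_def B_def power3_eq_cube)
  have lin: "(3 * real n - 5) / r = 3 * A * B\<^sup>2" "(3 * real n - 5) / (9 * r\<^sup>2) = B ^ 3"
    using ustar_linearization[OF assms(2), of n] by (simp_all add: A_def B_def)
  have Wrr: "Wrr = (3 * real n - 5) / (9 * r\<^sup>2) * W - lam\<^sup>2 * W - (4 - 2 * real n) / r * Wr"
    using ode by simp
  have "(ustar_rr n r - Wrr) + (real n - 1) / r * (ustar_r n r - Wr) + (ustar n r - W) * (ustar_r n r - Wr) ^ 3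
      - lam\<^sup>2 * W = (A + W) * (B + Wr) ^ 3 - A * B ^ 3 - (3 * real n - 5) / r * Wr - (3 * real n - 5) / (9 * r\<^sup>2) * W"
    using assms(2) unfolding stat Wrr by (simp add: A_def B_def field_simps power3_eq_cube)
  then show ?thesis
    using cubic_convexity[OF \<open>A \<ge> 0\<close> \<open>B \<ge> 0\<close> assms(3,4)] unfolding lin by linarith
qed

section \<open>Comparison principle for the radial equation\<close>

definition radial_classical ::
  "real \<Rightarrow> real \<Rightarrow> (real \<Rightarrow> real \<Rightarrow> real) \<Rightarrow> (real \<Rightarrow> real \<Rightarrow> real) \<Rightarrow> (real \<Rightarrow> real \<Rightarrow> real)
    \<Rightarrow> (real \<Rightarrow> real \<Rightarrow> real) \<Rightarrow> bool" where
  "radial_classical a b u ur urr ut \<longleftrightarrow>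
     continuous_on ({a..b} \<times> {0..}) (\<lambda>(r, t). u r t) \<and>
     (\<forall>r\<in>{a<..<b}. \<forall>t>0. ((\<lambda>s. u s t) has_real_derivative ur r t) (at r) \<and>
        ((\<lambda>s. ur s t) has_real_derivative urr r t) (at r) \<and>
        ((\<lambda>s. u r s) has_real_derivative ut r t) (at t))"

lemma radial_classical_diff:
  assumes "radial_classical a b u ur urr ut" "radial_classical a b w wr wrr wt"
  shows "radial_classical a b (\<lambda>r t. u r t - w r t) (\<lambda>r t. ur r t - wr r t)
    (\<lambda>r t. urr r t - wrr r t) (\<lambda>r t. ut r t - wt r t)"
proof -
  have "continuous_on ({a..b} \<times> {0..}) (\<lambda>p. (\<lambda>(r, t). u r t) p - (\<lambda>(r, t). w r t) p)"
    using assms by (intro continuous_on_diff) (auto simp: radial_classical_def)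
  then show ?thesis
    using assms by (auto simp: radial_classical_def case_prod_unfold intro!: derivative_intros)
qed

lemma local_max_second_deriv_nonpos:
  fixes f f' :: "real \<Rightarrow> real"
  assumes "a < x" "x < b"
    and "\<And>y. a < y \<Longrightarrow> y < b \<Longrightarrow> (f has_real_derivative f' y) (at y)"
    and "(f' has_real_derivative l) (at x)" "f' x = 0"
    and "\<And>y. a < y \<Longrightarrow> y < b \<Longrightarrow> f y \<le> f x"
  shows "l \<le> 0"
proof (rule ccontr)
  assume "\<not> l \<le> 0"
  then obtain d where "d > 0" and d: "\<And>h. 0 < h \<Longrightarrow> h < d \<Longrightarrow> f' x < f' (x + h)"
    using DERIV_pos_inc_right[OF assms(4)] by force
  define h where "h = min d (b - x) / 2"
  have "0 < h" "h < d" "x + h < b"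
    using \<open>d > 0\<close> assms(2) by (auto simp: h_def min_def field_simps)
  then obtain z where "x < z" "z < x + h" "f (x + h) - f x = h * f' z"
    using MVT2[of x "x + h" f f'] assms(1,3) by force
  moreover have "f' z > 0"
    using d[of "z - x"] \<open>x < z\<close> \<open>z < x + h\<close> \<open>h < d\<close> assms(5) by simp
  ultimately have "f (x + h) > f x"
    using \<open>0 < h\<close> by (simp add: algebra_simps)
  then show False
    using assms(1) assms(6)[of "x + h"] \<open>0 < h\<close> \<open>x + h < b\<close> by simp
qed

lemma left_max_deriv_nonneg:
  fixes f :: "real \<Rightarrow> real"
  assumes "(f has_real_derivative l) (at x)" "d > 0" "\<And>y. x - d < y \<Longrightarrow> y \<le> x \<Longrightarrow> f y \<le> f x"
  shows "l \<ge> 0"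
proof (rule ccontr)
  assume "\<not> l \<ge> 0"
  then obtain e where "e > 0" and e: "\<And>h. 0 < h \<Longrightarrow> h < e \<Longrightarrow> f x < f (x - h)"
    using DERIV_neg_dec_left[OF assms(1)] by force
  define h where "h = min d e / 2"
  have "0 < h" "h < e" "h < d"
    using \<open>e > 0\<close> assms(2) by (auto simp: h_def)
  then show False
    using e[of h] assms(3)[of "x - h"] by simp
qed

lemma radial_max_principle:
  assumes w: "radial_classical a b w wr wrr wt"
    and boundary: "\<And>r t. r \<in> {a..b} \<Longrightarrow> 0 \<le> t \<Longrightarrow> r = a \<or> r = b \<or> t = 0 \<Longrightarrow> w r t \<le> 0"
    and no_interior_max: "\<And>r t. r \<in> {a<..<b} \<Longrightarrow> t > 0 \<Longrightarrow> w r t > 0 \<Longrightarrow> wr r t = 0 \<Longrightarrow>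
      wrr r t \<le> 0 \<Longrightarrow> wt r t < 0"
    and "r \<in> {a..b}" "0 \<le> t"
  shows "w r t \<le> 0"
proof -
  have "continuous_on ({a..b} \<times> {0..t}) (\<lambda>(r, t). w r t)"
    using w by (auto simp: radial_classical_def elim!: continuous_on_subset)
  moreover have "({a..b} \<times> {0..t}) \<noteq> {}"
    using assms(4,5) by auto
  ultimately obtain r0 t0 where r0: "r0 \<in> {a..b}" and t0: "t0 \<in> {0..t}"
    and max: "\<And>r s. r \<in> {a..b} \<Longrightarrow> s \<in> {0..t} \<Longrightarrow> w r s \<le> w r0 t0"
    using continuous_attains_sup[of "{a..b} \<times> {0..t}" "\<lambda>(r, t). w r t"] by (auto simp: compact_Times)
  show ?thesis
  proof (rule ccontr)
    assume "\<not> w r t \<le> 0"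
    then have pos: "w r0 t0 > 0"
      using max[of r t] assms(4,5) by auto
    then have r0': "r0 \<in> {a<..<b}" and t0': "t0 > 0"
      using boundary[of r0 t0] r0 t0 by (auto simp: less_le)
    then have derivs: "\<And>r. r \<in> {a<..<b} \<Longrightarrow> ((\<lambda>s. w s t0) has_real_derivative wr r t0) (at r)"
        "((\<lambda>s. wr s t0) has_real_derivative wrr r0 t0) (at r0)"
        "((\<lambda>s. w r0 s) has_real_derivative wt r0 t0) (at t0)"
      using w r0' by (auto simp: radial_classical_def)
    have "wr r0 t0 = 0"
      by (rule DERIV_local_max[OF derivs(1)[OF r0'], of "min (r0 - a) (b - r0)"])
        (use r0' t0 max in \<open>auto simp: abs_if split: if_splits\<close>)
    moreover have "wrr r0 t0 \<le> 0"
      by (rule local_max_second_deriv_nonpos[of a r0 b "\<lambda>s. w s t0" "\<lambda>s. wr s t0"])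
        (use r0' t0 derivs \<open>wr r0 t0 = 0\<close> max in auto)
    moreover have "wt r0 t0 \<ge> 0"
      by (rule left_max_deriv_nonneg[OF derivs(3) t0']) (use r0 t0 max in auto)
    ultimately show False
      using no_interior_max[OF r0' t0' pos] by simp
  qed
qed

lemma radial_comparison:
  assumes u: "radial_classical a b u ur urr ut" and w: "radial_classical a b w wr wrr wt"
    and sub: "\<And>r t. r \<in> {a<..<b} \<Longrightarrow> t > 0 \<Longrightarrow> ut r t \<le> urr r t + k / r * ur r t + u r t * f (ur r t)"
    and super: "\<And>r t. r \<in> {a<..<b} \<Longrightarrow> t > 0 \<Longrightarrow> wrr r t + k / r * wr r t + w r t * f (wr r t) \<le> wt r t"
    and f_neg: "\<And>r t. r \<in> {a<..<b} \<Longrightarrow> t > 0 \<Longrightarrow> ur r t = wr r t \<Longrightarrow> f (ur r t) < 0"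
    and boundary: "\<And>r t. r \<in> {a..b} \<Longrightarrow> 0 \<le> t \<Longrightarrow> r = a \<or> r = b \<or> t = 0 \<Longrightarrow> u r t \<le> w r t"
    and "r \<in> {a..b}" "0 \<le> t"
  shows "u r t \<le> w r t"
proof -
  have "u r t - w r t \<le> 0"
  proof (rule radial_max_principle[OF radial_classical_diff[OF u w]])
    fix r t assume rt: "r \<in> {a<..<b}" "t > 0"
      and "u r t - w r t > 0" "ur r t - wr r t = 0" "urr r t - wrr r t \<le> 0"
    then have "(u r t - w r t) * f (ur r t) < 0"
      using f_neg by (simp add: mult_pos_neg)
    then show "ut r t - wt r t < 0"
      using sub[OF rt] super[OF rt] \<open>ur r t - wr r t = 0\<close> \<open>urr r t - wrr r t \<le> 0\<close>
      by (simp add: algebra_simps)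
  qed (use boundary assms in auto)
  then show ?thesis
    by simp
qed

lemma radial_classical_separable:
  assumes U: "\<And>r. r \<in> {a..b} \<Longrightarrow> (U has_real_derivative Ur r) (at r)"
      "\<And>r. r \<in> {a<..<b} \<Longrightarrow> (Ur has_real_derivative Urr r) (at r)"
    and V: "\<And>r. r \<in> {a..b} \<Longrightarrow> (V has_real_derivative Vr r) (at r)"
      "\<And>r. r \<in> {a<..<b} \<Longrightarrow> (Vr has_real_derivative Vrr r) (at r)"
  shows "radial_classical a b (\<lambda>r t. U r - exp (- lam\<^sup>2 * t) * V r)
    (\<lambda>r t. Ur r - exp (- lam\<^sup>2 * t) * Vr r) (\<lambda>r t. Urr r - exp (- lam\<^sup>2 * t) * Vrr r)
    (\<lambda>r t. lam\<^sup>2 * exp (- lam\<^sup>2 * t) * V r)"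
  unfolding radial_classical_def
proof (intro conjI ballI allI impI)
  have "continuous_on {a..b} U" "continuous_on {a..b} V"
    using U(1) V(1) DERIV_isCont by (blast intro: continuous_at_imp_continuous_on)+
  then have "continuous_on ({a..b} \<times> {0..}) (\<lambda>p. U (fst p) - exp (- lam\<^sup>2 * snd p) * V (fst p))"
    by (auto intro!: continuous_intros elim!: continuous_on_compose2)
  then show "continuous_on ({a..b} \<times> {0..}) (\<lambda>(r, t). U r - exp (- lam\<^sup>2 * t) * V r)"
    by (simp add: case_prod_unfold)
  fix r t :: real assume "r \<in> {a<..<b}" "t > 0"
  then show "((\<lambda>s. U s - exp (- lam\<^sup>2 * t) * V s) has_real_derivative Ur r - exp (- lam\<^sup>2 * t) * Vr r) (at r)"
      "((\<lambda>s. Ur s - exp (- lam\<^sup>2 * t) * Vr s) has_real_derivative Urr r - exp (- lam\<^sup>2 * t) * Vrr r) (at r)"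
    using U V by (auto intro!: DERIV_diff DERIV_cmult)
  show "((\<lambda>s. U r - exp (- lam\<^sup>2 * s) * V r) has_real_derivative lam\<^sup>2 * exp (- lam\<^sup>2 * t) * V r) (at t)"
    by (auto intro!: derivative_eq_intros)
qed

section \<open>The two barriers\<close>

definition radial_solution ::
  "nat \<Rightarrow> (real \<Rightarrow> real) \<Rightarrow> real \<Rightarrow> real \<Rightarrow> (real \<Rightarrow> real \<Rightarrow> real) \<Rightarrow> (real \<Rightarrow> real \<Rightarrow> real)
    \<Rightarrow> (real \<Rightarrow> real \<Rightarrow> real) \<Rightarrow> (real \<Rightarrow> real \<Rightarrow> real) \<Rightarrow> bool" where
  "radial_solution n f a b u ur urr ut \<longleftrightarrow> radial_classical a b u ur urr ut \<and>
     (\<forall>r\<in>{a<..<b}. \<forall>t>0. ut r t = urr r t + (real n - 1) / r * ur r t + u r t * f (ur r t))"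

lemma radial_solution_le_ustar:
  assumes "n \<ge> 2" "0 < a" and sol: "radial_solution n f a b u ur urr ut"
    and f_cube: "\<And>s. \<bar>s\<bar> \<le> c \<Longrightarrow> f s = s ^ 3"
    and grad: "\<And>r. r \<in> {a<..<b} \<Longrightarrow> \<bar>ustar_r n r\<bar> \<le> c"
    and boundary: "\<And>r t. r \<in> {a..b} \<Longrightarrow> 0 \<le> t \<Longrightarrow> r = a \<or> r = b \<or> t = 0 \<Longrightarrow> u r t \<le> ustar n r"
    and "r \<in> {a..b}" "0 \<le> t"
  shows "u r t \<le> ustar n r"
proof -
  have u: "radial_classical a b u ur urr ut"
    using sol by (simp add: radial_solution_def)
  have ustar: "radial_classical a b (\<lambda>r t. ustar n r) (\<lambda>r t. ustar_r n r) (\<lambda>r t. ustar_rr n r) (\<lambda>r t. 0)"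
    using radial_classical_separable[where U = "ustar n" and Ur = "ustar_r n" and Urr = "ustar_rr n"
        and V = "\<lambda>_. 0" and Vr = "\<lambda>_. 0" and Vrr = "\<lambda>_. 0"]
      ustar_has_real_derivative ustar_r_has_real_derivative \<open>0 < a\<close> by simp
  show ?thesis
  proof (rule radial_comparison[OF u ustar, where k = "real n - 1" and f = f])
    fix r t :: real assume "r \<in> {a<..<b}" "t > 0"
    then have "r > 0" "f (ustar_r n r) = ustar_r n r ^ 3"
      using \<open>0 < a\<close> f_cube grad by auto
    then show "ustar_rr n r + (real n - 1) / r * ustar_r n r + ustar n r * f (ustar_r n r) \<le> 0"
      using ustar_stationary by simp
    show "ur r t = ustar_r n r \<Longrightarrow> f (ur r t) < 0"
      using \<open>f (ustar_r n r) = ustar_r n r ^ 3\<close> ustar_r_neg[OF \<open>n \<ge> 2\<close> \<open>r > 0\<close>]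
      by (simp add: power3_eq_cube mult_neg_neg mult_pos_neg)
  qed (use sol boundary assms in \<open>auto simp: radial_solution_def\<close>)
qed

lemma radial_solution_ge_barrier:
  assumes "n \<ge> 2" "0 < a" and sol: "radial_solution n f a b u ur urr ut"
    and f_cube: "\<And>s. \<bar>s\<bar> \<le> c \<Longrightarrow> f s = s ^ 3"
    and V: "\<And>r. r \<in> {a..b} \<Longrightarrow> (V has_real_derivative Vr r) (at r)"
      "\<And>r. r \<in> {a<..<b} \<Longrightarrow> (Vr has_real_derivative Vrr r) (at r)"
    and ode: "\<And>r. r \<in> {a<..<b} \<Longrightarrow>
      Vrr r + (4 - 2 * real n) / r * Vr r - (3 * real n - 5) / (9 * r\<^sup>2) * V r + lam\<^sup>2 * V r = 0"
    and nonneg: "\<And>r. r \<in> {a<..<b} \<Longrightarrow> 0 \<le> V r \<and> 0 \<le> Vr r"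
    and grad: "\<And>r. r \<in> {a<..<b} \<Longrightarrow> \<bar>ustar_r n r - Vr r\<bar> \<le> c"
    and boundary: "\<And>r t. r \<in> {a..b} \<Longrightarrow> 0 \<le> t \<Longrightarrow> r = a \<or> r = b \<or> t = 0 \<Longrightarrow>
      ustar n r - exp (- lam\<^sup>2 * t) * V r \<le> u r t"
    and "r \<in> {a..b}" "0 \<le> t"
  shows "ustar n r - exp (- lam\<^sup>2 * t) * V r \<le> u r t"
proof -
  have barrier: "radial_classical a b (\<lambda>r t. ustar n r - exp (- lam\<^sup>2 * t) * V r)
    (\<lambda>r t. ustar_r n r - exp (- lam\<^sup>2 * t) * Vr r) (\<lambda>r t. ustar_rr n r - exp (- lam\<^sup>2 * t) * Vrr r)
    (\<lambda>r t. lam\<^sup>2 * exp (- lam\<^sup>2 * t) * V r)"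
    using \<open>0 < a\<close> by (intro radial_classical_separable V ustar_has_real_derivative ustar_r_has_real_derivative) auto
  have u: "radial_classical a b u ur urr ut"
    using sol by (simp add: radial_solution_def)
  show ?thesis
  proof (rule radial_comparison[OF barrier u, where k = "real n - 1" and f = f])
    fix r t :: real assume rt: "r \<in> {a<..<b}" "t > 0"
    define \<theta> where "\<theta> = exp (- lam\<^sup>2 * t)"
    have "r > 0" "0 < \<theta>" "\<theta> \<le> 1"
      using rt \<open>0 < a\<close> by (auto simp: \<theta>_def)
    have "0 \<le> \<theta> * Vr r" "\<theta> * Vr r \<le> Vr r"
      using nonneg[OF rt(1)] \<open>0 < \<theta>\<close> \<open>\<theta> \<le> 1\<close> by (auto intro: mult_left_le_one_le)
    then have "ustar_r n r - Vr r \<le> ustar_r n r - \<theta> * Vr r" "ustar_r n r - \<theta> * Vr r < 0"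
      using ustar_r_neg[OF \<open>n \<ge> 2\<close> \<open>r > 0\<close>] by auto
    then have f_eq: "f (ustar_r n r - \<theta> * Vr r) = (ustar_r n r - \<theta> * Vr r) ^ 3"
      using grad[OF rt(1)] by (intro f_cube) linarith
    have "lam\<^sup>2 * (\<theta> * V r) \<le> (ustar_rr n r - \<theta> * Vrr r) + (real n - 1) / r * (ustar_r n r - \<theta> * Vr r)
        + (ustar n r - \<theta> * V r) * (ustar_r n r - \<theta> * Vr r) ^ 3"
    proof (rule ustar_minus_profile_subsolution[OF \<open>n \<ge> 2\<close> \<open>r > 0\<close>])
      show "0 \<le> \<theta> * V r" "0 \<le> \<theta> * Vr r"
        using nonneg[OF rt(1)] \<open>0 < \<theta>\<close> by simp_all
      have "\<theta> * Vrr r + (4 - 2 * real n) / r * (\<theta> * Vr r) - (3 * real n - 5) / (9 * r\<^sup>2) * (\<theta> * V r)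
          + lam\<^sup>2 * (\<theta> * V r)
          = \<theta> * (Vrr r + (4 - 2 * real n) / r * Vr r - (3 * real n - 5) / (9 * r\<^sup>2) * V r + lam\<^sup>2 * V r)"
        by (simp add: algebra_simps)
      then show "\<theta> * Vrr r + (4 - 2 * real n) / r * (\<theta> * Vr r) - (3 * real n - 5) / (9 * r\<^sup>2) * (\<theta> * V r)
          + lam\<^sup>2 * (\<theta> * V r) = 0"
        using ode[OF rt(1)] by simp
    qed
    then show "lam\<^sup>2 * exp (- lam\<^sup>2 * t) * V r \<le> ustar_rr n r - exp (- lam\<^sup>2 * t) * Vrr r
        + (real n - 1) / r * (ustar_r n r - exp (- lam\<^sup>2 * t) * Vr r)
        + (ustar n r - exp (- lam\<^sup>2 * t) * V r) * f (ustar_r n r - exp (- lam\<^sup>2 * t) * Vr r)"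
      unfolding \<theta>_def[symmetric] by (simp add: f_eq mult.assoc)
    show "ustar_r n r - exp (- lam\<^sup>2 * t) * Vr r = ur r t \<Longrightarrow> f (ustar_r n r - exp (- lam\<^sup>2 * t) * Vr r) < 0"
      unfolding \<theta>_def[symmetric] using f_eq \<open>ustar_r n r - \<theta> * Vr r < 0\<close>
      by (simp add: power3_eq_cube mult_neg_neg mult_pos_neg)
  qed (use sol boundary assms in \<open>auto simp: radial_solution_def\<close>)
qed

lemma abs_deriv_less_of_SUP:
  fixes g g' :: "real \<Rightarrow> real"
  assumes "\<And>x. x \<in> {a..b} \<Longrightarrow> (g has_real_derivative g' x) (at x)" "\<And>x. x \<in> {a..b} \<Longrightarrow> isCont g' x"
    and "(SUP x\<in>{a..b}. \<bar>deriv g x\<bar>) < c" "x \<in> {a..b}"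
  shows "\<bar>g' x\<bar> < c"
proof -
  have "continuous_on {a..b} (\<lambda>x. \<bar>g' x\<bar>)"
    using assms(2) by (intro continuous_on_rabs continuous_at_imp_continuous_on) auto
  then have "continuous_on {a..b} (\<lambda>x. \<bar>deriv g x\<bar>)"
    by (rule continuous_on_cong[THEN iffD1, rotated 2]) (auto simp: DERIV_imp_deriv[OF assms(1)])
  then have "bdd_above ((\<lambda>x. \<bar>deriv g x\<bar>) ` {a..b})"
    by (intro bounded_imp_bdd_above compact_imp_bounded compact_continuous_image) auto
  then have "\<bar>deriv g x\<bar> < c"
    using cSUP_upper[OF assms(4)] assms(3) by fastforce
  then show ?thesis
    using DERIV_imp_deriv[OF assms(1)[OF assms(4)]] by simp
qed

theorem mainTheorem13:
  fixes n :: nat and R :: real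
    and u0 u0r u0rr :: "real \<Rightarrow> real"
    and lam Cv :: real
    and \<epsilon> :: real
    and u0e u0er u0err :: "real \<Rightarrow> real"
    and cstar :: real
    and f :: "real \<Rightarrow> real"
    and u ur urr ut :: "real \<Rightarrow> real \<Rightarrow> real"
  assumes n2: "n \<ge> 2"
    and R_pos: "0 < R"
    and R_bound: "R < sqrt (3/8 * (3 * real n - 5) * (2 * real n - 3) ^ 3)"
    \<comment> \<open>(C1)-(C2): u0 radial, C^2 on the closed ball minus the origin\<close>
    and u0_d1: "\<And>r. r \<in> {0<..R} \<Longrightarrow> (u0 has_real_derivative u0r r) (at r within {0<..R})"
    and u0_d2: "\<And>r. r \<in> {0<..R} \<Longrightarrow> (u0r has_real_derivative u0rr r) (at r within {0<..R})"
    and u0_c2: "continuous_on {0<..R} u0rr"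
    \<comment> \<open>(C3)\<close>
    and C3: "\<And>r. r \<in> {0<..R} \<Longrightarrow> ustar n r \<ge> u0 r"
    \<comment> \<open>(C4)\<close>
    and C4: "\<exists>M. eventually (\<lambda>r. \<bar>r powr (3/2 - real n - nu_const n) * (ustar n r - u0 r)\<bar> \<le> M) (at_right 0)"
    \<comment> \<open>(C5)\<close>
    and C5: "u0 R = ustar n R"
    \<comment> \<open>(C6)\<close>
    and C6: "\<exists>C>0. \<forall>r\<in>{0<..<R}. 0 \<ge> u0r r \<and> u0r r \<ge> - C * r powr (-2/3)"
    \<comment> \<open>lambda and C of the comparison function v\<close>
    and lam_pos: "0 < lam"
    and lamR: "lam * R < besselJ_deriv_first_root (nu_const n)"
    and Cv_pos: "0 < Cv"
    and u0_ge_v: "\<And>r. r \<in> {0<..<R} \<Longrightarrow> u0 r \<ge> ustar n r - vfun n Cv lam r 0"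
    \<comment> \<open>epsilon and the approximate initial datum\<close>
    and eps: "0 < \<epsilon>" "\<epsilon> < R"
    and u0e_d1: "\<And>r. r \<in> {\<epsilon>..R} \<Longrightarrow> (u0e has_real_derivative u0er r) (at r within {\<epsilon>..R})"
    and u0e_d2: "\<And>r. r \<in> {\<epsilon>..R} \<Longrightarrow> (u0er has_real_derivative u0err r) (at r within {\<epsilon>..R})"
    and u0e_c2: "continuous_on {\<epsilon>..R} u0err"
    and u0e_eps: "u0e \<epsilon> = ustar n \<epsilon> - vfun n Cv lam \<epsilon> 0"
    and u0e_slope: "\<And>r. r \<in> {\<epsilon>..R} \<Longrightarrow> u0r r \<le> u0er r \<and> u0er r \<le> 0"
    and u0e_bounds: "\<And>r. r \<in> {\<epsilon>..R} \<Longrightarrow> ustar n r \<ge> u0e r \<and> u0e r \<ge> ustar n r - vfun n Cv lam r 0"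
    and u0e_eq: "\<And>r. r \<in> {\<epsilon><..R} \<Longrightarrow> u0 r < ustar n \<epsilon> - vfun n Cv lam \<epsilon> 0 - \<epsilon> \<Longrightarrow> u0e r = u0 r"
    \<comment> \<open>the constant c*_eps (c_v = - e^(lambda^2 t) v(eps,t) = - v(eps,0))\<close>
    and cstar1: "cstar > 1"
    and cstar2: "cstar > (SUP r\<in>{\<epsilon>..R}. \<bar>deriv (ustar n) r\<bar>)"
    and cstar3: "cstar > (SUP r\<in>{\<epsilon>..R}. \<bar>deriv (\<lambda>s. ustar n s - vfun n Cv lam s 0) r\<bar>)"
    and cstar4: "cstar > (SUP r\<in>{\<epsilon>..R}. \<bar>u0er r\<bar>)"
    and cstar5: "- vfun n Cv lam \<epsilon> 0 + (real n - 1) / \<epsilon> * cstar + ustar n \<epsilon> * cstar ^ 3 \<le> 0"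
    \<comment> \<open>the cut-off nonlinearity f_eps\<close>
    and f_smooth: "smooth_compact_support f"
    and f_cube: "\<And>s. \<bar>s\<bar> \<le> cstar \<Longrightarrow> f s = s ^ 3"
    and f_neg: "\<And>s. s < 0 \<Longrightarrow> f s \<le> 0"
    \<comment> \<open>regularity of the radial solution u_eps\<close>
    and u_cont: "continuous_on ({\<epsilon>..R} \<times> {0..}) (\<lambda>(r, t). u r t)"
    and u_r: "\<And>r t. r \<in> {\<epsilon><..<R} \<Longrightarrow> t > 0 \<Longrightarrow> ((\<lambda>s. u s t) has_real_derivative ur r t) (at r)"
    and u_rr: "\<And>r t. r \<in> {\<epsilon><..<R} \<Longrightarrow> t > 0 \<Longrightarrow> ((\<lambda>s. ur s t) has_real_derivative urr r t) (at r)"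
    and u_t: "\<And>r t. r \<in> {\<epsilon><..<R} \<Longrightarrow> t > 0 \<Longrightarrow> ((\<lambda>s. u r s) has_real_derivative ut r t) (at t)"
    and derivs_cont: "continuous_on ({\<epsilon><..<R} \<times> {0<..}) (\<lambda>(r, t). ur r t)"
      "continuous_on ({\<epsilon><..<R} \<times> {0<..}) (\<lambda>(r, t). urr r t)"
      "continuous_on ({\<epsilon><..<R} \<times> {0<..}) (\<lambda>(r, t). ut r t)"
    and grad_loc_bdd: "\<And>T. T > 0 \<Longrightarrow> \<exists>M. \<forall>r\<in>{\<epsilon><..<R}. \<forall>t\<in>{0<..T}. \<bar>ur r t\<bar> \<le> M"
    \<comment> \<open>the equation (Laplacian of a radial function in R^n), boundary and initial data\<close>
    and pde: "\<And>r t. r \<in> {\<epsilon><..<R} \<Longrightarrow> t > 0 \<Longrightarrow>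
               ut r t = urr r t + (real n - 1) / r * ur r t + u r t * f (ur r t)"
    and bc_eps: "\<And>t. t > 0 \<Longrightarrow> u \<epsilon> t = ustar n \<epsilon> - vfun n Cv lam \<epsilon> t"
    and bc_R: "\<And>t. t > 0 \<Longrightarrow> u R t = ustar n R"
    and ic: "\<And>r. r \<in> {\<epsilon>..R} \<Longrightarrow> u r 0 = u0e r"
  shows "\<forall>r\<in>{\<epsilon><..<R}. \<forall>t>0. ustar n r \<ge> u r t \<and> u r t \<ge> ustar n r - vfun n Cv lam r t"
proof -
  obtain Vr Vrr where Vr: "\<And>r. r > 0 \<Longrightarrow> ((\<lambda>r. vfun n Cv lam r 0) has_real_derivative Vr r) (at r)"
    and Vrr: "\<And>r. r > 0 \<Longrightarrow> (Vr has_real_derivative Vrr r) (at r)"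
    and ode: "\<And>r. r > 0 \<Longrightarrow> Vrr r + (4 - 2 * real n) / r * Vr r
      - (3 * real n - 5) / (9 * r\<^sup>2) * vfun n Cv lam r 0 + lam\<^sup>2 * vfun n Cv lam r 0 = 0"
    and sign: "\<And>r. 0 < r \<Longrightarrow> lam * r < besselJ_deriv_first_root (nu_const n) \<Longrightarrow> Cv \<ge> 0 \<Longrightarrow>
      0 \<le> vfun n Cv lam r 0 \<and> 0 \<le> Vr r"
    by (rule vfun_initial_profile[OF n2 lam_pos, where C = Cv]) (rule that)
  have nonneg: "0 \<le> vfun n Cv lam r 0 \<and> 0 \<le> Vr r" if "r \<in> {\<epsilon>..R}" for r
  proof (rule sign)
    have "lam * r \<le> lam * R"
      using that lam_pos by simp
    then show "lam * r < besselJ_deriv_first_root (nu_const n)"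
      using lamR by linarith
  qed (use that eps(1) Cv_pos in auto)
  have vfun_t: "vfun n Cv lam r t = exp (- lam\<^sup>2 * t) * vfun n Cv lam r 0" for r t
    by (simp add: vfun_def)
  have grad_ustar: "\<bar>ustar_r n r\<bar> \<le> cstar" if "r \<in> {\<epsilon><..<R}" for r
    using abs_deriv_less_of_SUP[OF ustar_has_real_derivative DERIV_isCont[OF ustar_r_has_real_derivative] cstar2, of r]
      eps(1) that by force
  have grad_barrier: "\<bar>ustar_r n r - Vr r\<bar> \<le> cstar" if "r \<in> {\<epsilon><..<R}" for r
    using abs_deriv_less_of_SUP[OF DERIV_diff[OF ustar_has_real_derivative Vr]
        DERIV_isCont[OF DERIV_diff[OF ustar_r_has_real_derivative Vrr]] cstar3, of r] eps(1) that by force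
  have sol: "radial_solution n f \<epsilon> R u ur urr ut"
    using u_cont u_r u_rr u_t pde by (simp add: radial_solution_def radial_classical_def)
  have boundary: "ustar n r - exp (- lam\<^sup>2 * t) * vfun n Cv lam r 0 \<le> u r t \<and> u r t \<le> ustar n r"
    if rt: "r \<in> {\<epsilon>..R}" "0 \<le> t" "r = \<epsilon> \<or> r = R \<or> t = 0" for r t
    using rt ic[OF rt(1)] u0e_bounds[OF rt(1)] bc_eps[of t] bc_R[of t] nonneg[OF rt(1)] vfun_t[of r t]
    by (cases "t = 0") auto
  show ?thesis
  proof (intro ballI allI impI conjI)
    fix r t :: real assume "r \<in> {\<epsilon><..<R}" "t > 0"
    then have rt: "r \<in> {\<epsilon>..R}" "0 \<le> t"
      by auto
    show "u r t \<le> ustar n r"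
      using radial_solution_le_ustar[OF n2 eps(1) sol f_cube grad_ustar boundary[THEN conjunct2] rt] .
    show "ustar n r - vfun n Cv lam r t \<le> u r t"
      using radial_solution_ge_barrier[OF n2 eps(1) sol f_cube Vr Vrr ode nonneg grad_barrier
          boundary[THEN conjunct1] rt] vfun_t[of r t] eps(1) by simp
  qed
qed

end
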